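(* For a positive integer $k$ and $\theta>0$, define $g_k(\theta)=\frac{-ke^{-\theta}}{(1-e^{-\theta})^2}+\sum_{j=1}^{k}\frac{j^2e^{-\theta j}}{(1-e^{-\theta j})^2}$. Then $g_k$ is non-positive and increasing in $\theta$ for $\theta>4\ln(2)$. Additionally, $g_k$ is decreasing in $k$. *)

theory Defs
  imports Complex_Main
begin

definition g :: "nat \<Rightarrow> real \<Rightarrow> real" where
  "g k \<theta> = - real k * exp (- \<theta>) / (1 - exp (- \<theta>))\<^sup>2
     + (\<Sum>j=1..k. (real j)\<^sup>2 * exp (- \<theta> * real j) / (1 - exp (- \<theta> * real j))\<^sup>2)"

end

theory Submission
  imports Defs
begin

(* With q_j = g_summand j, q_j(\<theta>) = j^2 e^(-j\<theta>) / (1 - e^(-j\<theta>))^2 = (j / (2 sinh (j\<theta>/2)))^2, so that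
   g_k = \<Sum>j=1..k (q_j - q_1). The addition formula and cosh \<ge> 1 give sinh (j x) \<ge> j sinh x, hence
   q_j \<le> q_1: g_k decreases in k, and g_1 = 0 makes it non-positive.
   For monotonicity in \<theta> put x = e^(-\<theta>); then -q_j' = j^3 x^j (1 + x^j) / (1 - x^j)^3, and
   x < 1/16 together with 2 j^3 \<le> 16^(j-1) gives -q_j' \<le> -q_1', so g_k' \<ge> 0. *)

definition g_summand :: "nat \<Rightarrow> real \<Rightarrow> real" where
  "g_summand j \<theta> = (real j)\<^sup>2 * exp (- \<theta> * real j) / (1 - exp (- \<theta> * real j))\<^sup>2"

definition g_summand_deriv :: "nat \<Rightarrow> real \<Rightarrow> real" where
  "g_summand_deriv j \<theta> =
     - (real j ^ 3 * exp (- \<theta> * real j) * (1 + exp (- \<theta> * real j)) / (1 - exp (- \<theta> * real j)) ^ 3)"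

lemma g_eq_sum_diff: "g k \<theta> = (\<Sum>j=1..k. g_summand j \<theta> - g_summand 1 \<theta>)"
  unfolding g_def g_summand_def by (simp add: sum_subtractf)

lemma g_zero: "g 0 \<theta> = 0" and g_one: "g 1 \<theta> = 0"
  by (simp_all add: g_eq_sum_diff)

lemma sinh_nat_mult_ge:
  fixes x :: real
  assumes "x \<ge> 0"
  shows "real n * sinh x \<le> sinh (real n * x)"
proof (induction n)
  case 0 then show ?case by simp
next
  case (Suc n)
  have "real (Suc n) * sinh x \<le> sinh (real n * x) * cosh x + cosh (real n * x) * sinh x"
  proof -
    have "real n * sinh x \<le> sinh (real n * x) * cosh x"
      using Suc.IH assms cosh_real_ge_1[of x] mult_left_mono[of 1 "cosh x" "sinh (real n * x)"]
      by simp
    moreover have "sinh x \<le> cosh (real n * x) * sinh x"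
      using assms cosh_real_ge_1[of "real n * x"] mult_right_mono[of 1 _ "sinh x"] by simp
    ultimately show ?thesis by (simp add: distrib_right)
  qed
  also have "\<dots> = sinh (real (Suc n) * x)"
    by (simp add: distrib_right sinh_add)
  finally show ?case .
qed

lemma g_summand_eq_sinh:
  assumes "\<theta> > 0"
  shows "g_summand j \<theta> = (real j / (2 * sinh (real j * \<theta> / 2)))\<^sup>2"
proof -
  define a where "a = exp (- (real j * \<theta> / 2))"
  have a: "a > 0" using a_def by simp
  have exp_a: "exp (- \<theta> * real j) = a * a"
    unfolding a_def by (simp flip: exp_add)
  have "2 * sinh (real j * \<theta> / 2) = 1 / a - a"
    unfolding sinh_def a_def by (simp add: exp_minus inverse_eq_divide scaleR_conv_of_real)
  also have "\<dots> = (1 - a * a) / a" using a by (simp add: field_simps)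
  finally have sinh_a: "2 * sinh (real j * \<theta> / 2) = (1 - a * a) / a" .
  show ?thesis unfolding g_summand_def exp_a sinh_a using a
    by (simp add: power2_eq_square field_simps)
qed

lemma g_summand_le_first:
  assumes "\<theta> > 0" and "j \<ge> 1"
  shows "g_summand j \<theta> \<le> g_summand 1 \<theta>"
proof -
  have sinh_pos: "sinh (\<theta> / 2) > 0" using assms(1) by simp
  have "real j / (2 * sinh (real j * \<theta> / 2)) \<le> real j / (2 * (real j * sinh (\<theta> / 2)))"
    using sinh_nat_mult_ge[of "\<theta> / 2" j] assms sinh_pos
    by (intro divide_left_mono mult_left_mono) auto
  also have "\<dots> = 1 / (2 * sinh (\<theta> / 2))" using assms(2) by simp
  finally have "(real j / (2 * sinh (real j * \<theta> / 2)))\<^sup>2 \<le> (1 / (2 * sinh (\<theta> / 2)))\<^sup>2"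
    using assms(1) by (intro power_mono) auto
  then show ?thesis using g_summand_eq_sinh[OF assms(1)] by simp
qed

lemma g_antimono_in_k:
  assumes "\<theta> > 0" and "k \<le> k'"
  shows "g k' \<theta> \<le> g k \<theta>"
  using assms(2)
proof (induction k' rule: dec_induct)
  case base then show ?case by simp
next
  case (step m)
  have "g (Suc m) \<theta> = g m \<theta> + (g_summand (Suc m) \<theta> - g_summand 1 \<theta>)"
    by (simp add: g_eq_sum_diff)
  also have "\<dots> \<le> g m \<theta>" using g_summand_le_first[OF assms(1), of "Suc m"] by simp
  finally show ?case using step.IH by simp
qed

lemma g_nonpos:
  assumes "\<theta> > 0"
  shows "g k \<theta> \<le> 0"
proof (cases k)
  case 0 then show ?thesis by (simp add: g_zero)
next
  case (Suc m)
  then have "g k \<theta> \<le> g 1 \<theta>" using g_antimono_in_k[OF assms, of 1 k] by simp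
  then show ?thesis by (simp only: g_one)
qed

lemma has_real_derivative_over_one_minus_squared:
  fixes x :: real
  assumes "x \<noteq> 1"
  shows "((\<lambda>x. x / (1 - x)\<^sup>2) has_real_derivative (1 + x) / (1 - x) ^ 3) (at x)"
proof -
  define d where "d = 1 - x"
  have "d \<noteq> 0" and x_eq: "x = 1 - d" using assms by (auto simp: d_def)
  have "((\<lambda>x. x / (1 - x)\<^sup>2) has_real_derivative
          ((1 * (1 - x)\<^sup>2 - x * (2 * (1 - x) * - 1)) / ((1 - x)\<^sup>2)\<^sup>2)) (at x)"
    using assms by (auto intro!: derivative_eq_intros simp: power2_eq_square)
  also have "(1 * (1 - x)\<^sup>2 - x * (2 * (1 - x) * - 1)) / ((1 - x)\<^sup>2)\<^sup>2 = (1 + x) / (1 - x) ^ 3"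
    unfolding x_eq using \<open>d \<noteq> 0\<close> by (simp add: field_simps power2_eq_square power3_eq_cube)
  finally show ?thesis .
qed

lemma g_summand_has_derivative:
  assumes "\<theta> > 0" and "j \<ge> 1"
  shows "(g_summand j has_real_derivative g_summand_deriv j \<theta>) (at \<theta>)"
proof -
  define E where "E = exp (- \<theta> * real j)"
  have "E < 1" unfolding E_def using assms by simp
  have "((\<lambda>x. x / (1 - x)\<^sup>2) \<circ> (\<lambda>\<theta>. exp (- \<theta> * real j)) has_real_derivative
          (1 + E) / (1 - E) ^ 3 * (- real j * E)) (at \<theta>)"
    using \<open>E < 1\<close> assms unfolding E_def
    by (intro DERIV_chain has_real_derivative_over_one_minus_squared)
       (auto intro!: derivative_eq_intros)
  then have "((\<lambda>\<theta>. (real j)\<^sup>2 * (((\<lambda>x. x / (1 - x)\<^sup>2) \<circ> (\<lambda>\<theta>. exp (- \<theta> * real j))) \<theta>))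
              has_real_derivative (real j)\<^sup>2 * ((1 + E) / (1 - E) ^ 3 * (- real j * E))) (at \<theta>)"
    by (rule DERIV_cmult)
  moreover have "(real j)\<^sup>2 * ((1 + E) / (1 - E) ^ 3 * (- real j * E)) = g_summand_deriv j \<theta>"
    unfolding g_summand_deriv_def E_def[symmetric] by (simp add: power2_eq_square power3_eq_cube)
  moreover have "(\<lambda>\<theta>. (real j)\<^sup>2 * (((\<lambda>x. x / (1 - x)\<^sup>2) \<circ> (\<lambda>\<theta>. exp (- \<theta> * real j))) \<theta>))
      = g_summand j"
    by (simp add: fun_eq_iff g_summand_def)
  ultimately show ?thesis by (simp only:)
qed

lemma g_has_derivative:
  assumes "\<theta> > 0"
  shows "(g k has_real_derivative (\<Sum>j=1..k. g_summand_deriv j \<theta> - g_summand_deriv 1 \<theta>)) (at \<theta>)"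
proof -
  have "g k = (\<lambda>\<theta>. \<Sum>j=1..k. g_summand j \<theta> - g_summand 1 \<theta>)"
    by (simp add: g_eq_sum_diff fun_eq_iff)
  then show ?thesis
    by (simp only:) (intro DERIV_sum DERIV_diff g_summand_has_derivative assms; simp)
qed

lemma cube_le_sixteen_power: "n \<ge> 2 \<Longrightarrow> 2 * n ^ 3 \<le> (16::nat) ^ (n - 1)"
proof (induction n rule: dec_induct)
  case base then show ?case by simp
next
  case (step m)
  have "2 * (Suc m) ^ 3 \<le> 16 * (2 * m ^ 3)"
  proof -
    have "(Suc m) ^ 3 \<le> (2 * m) ^ 3" using step.hyps by (intro power_mono) auto
    then show ?thesis by (simp add: power_mult_distrib)
  qed
  also have "\<dots> \<le> 16 * 16 ^ (m - 1)" using step.IH by simp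
  also have "\<dots> = 16 ^ (Suc m - 1)" using step.hyps by (cases m) auto
  finally show ?case .
qed

lemma power_derivative_term_le_first:
  fixes x :: real
  assumes "0 \<le> x" and "x \<le> 1/16" and "j \<ge> 1"
  shows "real j ^ 3 * x ^ j * (1 + x ^ j) / (1 - x ^ j) ^ 3 \<le> x * (1 + x) / (1 - x) ^ 3"
proof (cases "j = 1")
  case True then show ?thesis by simp
next
  case False
  then have "j \<ge> 2" using assms(3) by simp
  have xj_le_x: "x ^ j \<le> x" using power_decreasing[of 1 j x] assms by simp
  have x_power_eq: "x ^ j = x * x ^ (j - 1)" using assms(3) by (simp add: power_eq_if)
  have "2 * real j ^ 3 * x ^ (j - 1) \<le> 16 ^ (j - 1) * (1/16) ^ (j - 1)"
  proof (rule mult_mono)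
    show "2 * real j ^ 3 \<le> 16 ^ (j - 1)"
      using of_nat_mono[OF cube_le_sixteen_power[OF \<open>j \<ge> 2\<close>]] by simp
  qed (use assms in \<open>auto intro: power_mono\<close>)
  also have "\<dots> = 1" by (simp flip: power_mult_distrib)
  finally have key: "2 * real j ^ 3 * x ^ (j - 1) \<le> 1" .
  have "real j ^ 3 * x ^ j * (1 + x ^ j) \<le> real j ^ 3 * x ^ j * 2"
    using xj_le_x assms by (intro mult_left_mono) auto
  also have "\<dots> = x * (2 * real j ^ 3 * x ^ (j - 1))" unfolding x_power_eq by simp
  also have "\<dots> \<le> x * (1 + x)" using key assms by (intro mult_left_mono) auto
  finally have numerator: "real j ^ 3 * x ^ j * (1 + x ^ j) \<le> x * (1 + x)" .
  have denominator: "(1 - x) ^ 3 \<le> (1 - x ^ j) ^ 3"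
    using xj_le_x assms by (intro power_mono) auto
  show ?thesis
    using numerator denominator assms by (intro frac_le) auto
qed

lemma g_summand_deriv_ge_first:
  assumes "\<theta> \<ge> 4 * ln 2" and "j \<ge> 1"
  shows "g_summand_deriv 1 \<theta> \<le> g_summand_deriv j \<theta>"
proof -
  define x where "x = exp (- \<theta>)"
  have "exp (- (4 * ln 2)) = (1/16::real)"
    using exp_of_nat_mult[of 4 "ln (2::real)"] by (simp add: exp_minus)
  then have "x \<le> 1/16"
    unfolding x_def using assms(1) by (metis exp_le_cancel_iff neg_le_iff_le)
  moreover have "exp (- \<theta> * real j) = x ^ j"
    unfolding x_def by (simp add: mult.commute flip: exp_of_nat_mult)
  ultimately show ?thesis
    unfolding g_summand_deriv_def
    using power_derivative_term_le_first[of x j] assms(2) by (simp add: x_def)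
qed

lemma g_mono_on:
  "mono_on {4 * ln 2 <..} (g k)"
proof (rule mono_onI)
  fix r s :: real
  assume "r \<in> {4 * ln 2 <..}" and "r \<le> s"
  show "g k r \<le> g k s"
  proof (rule DERIV_nonneg_imp_nondecreasing[OF \<open>r \<le> s\<close>])
    fix \<theta> assume "r \<le> \<theta>"
    then have "\<theta> > 4 * ln 2" using \<open>r \<in> {4 * ln 2 <..}\<close> by simp
    moreover have "4 * ln 2 > (0::real)" by simp
    ultimately have "\<theta> \<ge> 4 * ln 2" and "\<theta> > 0" by linarith+
    have "0 \<le> (\<Sum>j=1..k. g_summand_deriv j \<theta> - g_summand_deriv 1 \<theta>)"
      using g_summand_deriv_ge_first[OF \<open>\<theta> \<ge> 4 * ln 2\<close>] by (intro sum_nonneg) simp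
    then show "\<exists>y. (g k has_real_derivative y) (at \<theta>) \<and> 0 \<le> y"
      using g_has_derivative[OF \<open>\<theta> > 0\<close>] by blast
  qed
qed

theorem mainTheorem5:
  shows "(\<forall>k::nat. k \<ge> 1 \<longrightarrow>
            (\<forall>\<theta>::real. \<theta> > 4 * ln 2 \<longrightarrow> g k \<theta> \<le> 0)
          \<and> mono_on {4 * ln 2 <..} (g k))
       \<and> (\<forall>\<theta>::real. \<theta> > 0 \<longrightarrow>
            (\<forall>k k'::nat. 1 \<le> k \<longrightarrow> k \<le> k' \<longrightarrow> g k' \<theta> \<le> g k \<theta>))"
proof -
  have "\<theta> > 0" if "\<theta> > 4 * ln 2" for \<theta> :: real
    using that ln_gt_zero[of 2] by linarith
  then show ?thesis
    using g_nonpos g_mono_on g_antimono_in_k by blast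
qed

end
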